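(* Let $d\ge 2$ and $1\le k\le d^2$ be integers. Let $A,B,C,D$ be quantum systems, each with Hilbert space $\mathbb{C}^d$, and let $\psi^+_{XY}=|\psi^+\rangle\langle\psi^+|_{XY}$ with $|\psi^+\rangle=\frac{1}{\sqrt d}\sum_{i=0}^{d-1}|i\rangle|i\rangle$ denote the maximally entangled state on a pair of such systems $X,Y$. For a POVM $\{M^{(i)}_{DA}\}_{i=1}^{k}$ on $DA$ (i.e. $M^{(i)}_{DA}\ge 0$ and $\sum_{i=1}^k M^{(i)}_{DA}=\mathbf 1_{DA}$) and unitaries $\{U^{(i)}_B\}_{i=1}^k$ on $B$, define $$F\big(\{M^{(i)}_{DA},U^{(i)}_B\}\big)=\sum_{i=1}^{k}\operatorname{tr}\Big[\psi^+_{CB}\,U^{(i)}_B\,\operatorname{tr}_{AD}\big[(M^{(i)}_{DA}\otimes\mathbf 1_{CB})(\psi^+_{AB}\otimes\psi^+_{CD})\big]\,U^{(i)\dagger}_B\Big].$$ Then $$\max_{\{M^{(i)}_{DA},U^{(i)}_B\}} F\big(\{M^{(i)}_{DA},U^{(i)}_B\}\big)=\frac{k}{d^2},$$ where the maximum runs over all $k$-outcome POVMs on $DA$ and all choices of unitaries on $B$.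
   Context: This quantity is the entanglement fidelity of a teleportation protocol in which Alice measures $DA$ with a $k$-outcome POVM, communicates the outcome $i$ to Bob, and Bob applies the correction $U^{(i)}_B$; the goal is for $C$ and $B$ to end up maximally entangled. *)

theory Defs
  imports "Jordan_Normal_Form.Matrix" "Jordan_Normal_Form.Conjugate"
begin

(* Operators on a pair XY are (d*d) x (d*d) matrices, basis |x>|y> encoded as x*d + y
   (first-named system is the more significant index). Complex numbers carry the
   standard partial order of HOL-Library.Complex_Order (z <= w iff Im z = Im w and Re z <= Re w). *)

definition adjoint_mat :: "complex mat \<Rightarrow> complex mat" where
  "adjoint_mat A = mat (dim_col A) (dim_row A) (\<lambda>(i,j). cnj (A $$ (j,i)))"

definition psd_mat :: "nat \<Rightarrow> complex mat \<Rightarrow> bool" where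
  "psd_mat n M \<longleftrightarrow> M \<in> carrier_mat n n \<and>
     (\<forall>v \<in> carrier_vec n. 0 \<le> (\<Sum>i<n. cnj (v $ i) * (M *\<^sub>v v) $ i))"

definition unitary_mat :: "nat \<Rightarrow> complex mat \<Rightarrow> bool" where
  "unitary_mat n U \<longleftrightarrow> U \<in> carrier_mat n n \<and>
     U * adjoint_mat U = 1\<^sub>m n \<and> adjoint_mat U * U = 1\<^sub>m n"

(* k-outcome POVM {M i}_{i=1..k} on DA (index (dd,a) encoded as dd*d + a);
   the completeness relation sum_i M i = 1 is stated entrywise *)
definition is_povm :: "nat \<Rightarrow> nat \<Rightarrow> (nat \<Rightarrow> complex mat) \<Rightarrow> bool" where
  "is_povm d k M \<longleftrightarrow> (\<forall>i\<in>{1..k}. psd_mat (d*d) (M i)) \<and>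
     (\<forall>r<d*d. \<forall>s<d*d. (\<Sum>i\<in>{1..k}. M i $$ (r,s)) = 1\<^sub>m (d*d) $$ (r,s))"

(* matrix element <x y| psi^+ ><psi^+ |x' y'> of the maximally entangled state on XY *)
definition psi_plus :: "nat \<Rightarrow> nat \<Rightarrow> nat \<Rightarrow> nat \<Rightarrow> nat \<Rightarrow> complex" where
  "psi_plus d x y x' y' = (if x = y \<and> x' = y' then 1 / of_nat d else 0)"

(* matrix element <c b| tr_{AD}[(M_DA (x) 1_CB)(psi^+_AB (x) psi^+_CD)] |c' b'> *)
definition red_AD :: "nat \<Rightarrow> complex mat \<Rightarrow> nat \<Rightarrow> nat \<Rightarrow> nat \<Rightarrow> nat \<Rightarrow> complex" where
  "red_AD d M c b c' b' =
     (\<Sum>a<d. \<Sum>dd<d. \<Sum>a2<d. \<Sum>d2<d.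
        M $$ (dd*d + a, d2*d + a2) * psi_plus d a2 b a b' * psi_plus d c d2 c' dd)"

(* matrix element <c b| (1_C (x) U_B) R (1_C (x) U_B)^dagger |c' b'> for an operator R on CB *)
definition conj_B :: "nat \<Rightarrow> complex mat \<Rightarrow> (nat \<Rightarrow> nat \<Rightarrow> nat \<Rightarrow> nat \<Rightarrow> complex)
    \<Rightarrow> nat \<Rightarrow> nat \<Rightarrow> nat \<Rightarrow> nat \<Rightarrow> complex" where
  "conj_B d U R c b c' b' =
     (\<Sum>b1<d. \<Sum>b2<d. U $$ (b, b1) * R c b1 c' b2 * cnj (U $$ (b', b2)))"

definition tr_psi_CB :: "nat \<Rightarrow> (nat \<Rightarrow> nat \<Rightarrow> nat \<Rightarrow> nat \<Rightarrow> complex) \<Rightarrow> complex" where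
  "tr_psi_CB d X = (\<Sum>c<d. \<Sum>b<d. \<Sum>c'<d. \<Sum>b'<d. psi_plus d c b c' b' * X c' b' c b)"

definition tele_fid :: "nat \<Rightarrow> nat \<Rightarrow> (nat \<Rightarrow> complex mat) \<Rightarrow> (nat \<Rightarrow> complex mat) \<Rightarrow> complex" where
  "tele_fid d k M U = (\<Sum>i\<in>{1..k}. tr_psi_CB d (conj_B d (U i) (red_AD d (M i))))"

end

theory Submission
  imports Defs "HOL-Number_Theory.Cong"
begin

(* Identify a unitary U with the vector u(c*d + b) = U(c, b). The i-th term of the fidelity is then
   <u_i, M_i u_i> / d^3. As the M_j are positive and sum to the identity, <u, M_i u> <= ||u||^2 = d,
   so the fidelity is at most k d / d^3 = k / d^2. The bound is attained by the d^2 Weyl operators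
   X^a Z^b: their vectors are pairwise orthogonal of squared norm d and resolve d times the identity,
   so measuring k - 1 of these directions individually, lumping the rest into the last outcome and
   correcting with the matching Weyl operator makes every term equal to d / d^3. *)

lemma sum_lessThan_mult_split:
  fixes f :: "nat \<Rightarrow> 'a::comm_monoid_add"
  shows "(\<Sum>r<n*d. f r) = (\<Sum>c<n. \<Sum>b<d. f (c*d + b))"
proof -
  have "sum f {c*d..<c*d + d} = (\<Sum>b<d. f (c*d + b))" for c
    using sum.shift_bounds_nat_ivl[of f 0 "c*d" d] by (simp add: lessThan_atLeast0 add.commute)
  then show ?thesis
    by (simp flip: sum.nat_group)
qed

lemma sum_lessThan_mult_div_mod:
  fixes g :: "nat \<Rightarrow> nat \<Rightarrow> 'a::comm_monoid_add"
  shows "(\<Sum>r<d*d. g (r div d) (r mod d)) = (\<Sum>a<d. \<Sum>b<d. g a b)"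
  unfolding sum_lessThan_mult_split by (intro sum.cong refl) simp

lemma sum_lessThan_rotate:
  fixes g :: "nat \<Rightarrow> 'a::comm_monoid_add"
  shows "(\<Sum>s<d. g ((s + a) mod d)) = (\<Sum>r<d. g r)"
proof (cases "d = 0")
  case False
  have inj: "inj_on (\<lambda>s. (s + a) mod d) {..<d}"
    by (rule inj_onI) (metis cong_add_rcancel_nat cong_def lessThan_iff mod_less)
  moreover have "(\<lambda>s. (s + a) mod d) ` {..<d} = {..<d}"
    using False by (intro endo_inj_surj inj) auto
  ultimately show ?thesis
    by (metis (no_types, lifting) comp_apply sum.reindex_cong)
qed simp

section \<open>Characters of the cyclic group\<close>

lemma sum_cis_multiples:
  fixes m :: int
  assumes "0 < d"
  shows "(\<Sum>s<d. cis (2 * pi * of_int m * real s / real d)) = (if int d dvd m then of_nat d else 0)"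
proof -
  define z where "z = cis (2 * pi * of_int m / real d)"
  have pow: "cis (2 * pi * of_int m * real s / real d) = z ^ s" for s
    unfolding z_def DeMoivre by (simp add: field_simps)
  have "z = 1 \<longleftrightarrow> int d dvd m"
  proof
    assume "z = 1"
    then obtain n :: int where "2 * pi * of_int m / real d = 2 * pi * of_int n"
      by (auto simp: z_def complex_eq_iff cos_one_2pi_int)
    then have "real_of_int m = real_of_int (n * int d)"
      using assms by (simp add: field_simps)
    then show "int d dvd m"
      by (metis dvd_triv_right of_int_eq_iff)
  next
    assume "int d dvd m"
    then obtain n where "m = int d * n" ..
    then show "z = 1"
      using assms by (simp add: z_def mult.assoc[symmetric])
  qed
  moreover have "z ^ d = 1"
    unfolding z_def DeMoivre using assms by (simp add: mult.assoc[symmetric])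
  ultimately show ?thesis
    unfolding pow by (auto simp: geometric_sum)
qed

lemma sum_cis_diff:
  assumes "b < d" "b' < d"
  shows "(\<Sum>s<d. cis (2 * pi * (real b' - real b) * real s / real d)) = (if b = b' then of_nat d else 0)"
proof -
  have "int d dvd int b' - int b \<longleftrightarrow> b = b'"
  proof
    assume "int d dvd int b' - int b"
    then show "b = b'"
      using assms dvd_imp_le_int[of "int b' - int b" "int d"] by fastforce
  qed simp
  then show ?thesis
    using sum_cis_multiples[of d "int b' - int b"] assms by simp
qed

section \<open>Quadratic forms and POVMs\<close>

definition inner_fun :: "nat \<Rightarrow> (nat \<Rightarrow> complex) \<Rightarrow> (nat \<Rightarrow> complex) \<Rightarrow> complex" where
  "inner_fun n v w = (\<Sum>r<n. cnj (v r) * w r)"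

definition quad_form :: "nat \<Rightarrow> complex mat \<Rightarrow> (nat \<Rightarrow> complex) \<Rightarrow> complex" where
  "quad_form n M w = (\<Sum>r<n. cnj (w r) * (\<Sum>s<n. M $$ (r, s) * w s))"

lemma quad_form_cong: "(\<And>r. r < n \<Longrightarrow> w r = w' r) \<Longrightarrow> quad_form n M w = quad_form n M w'"
  unfolding quad_form_def by (intro sum.cong refl) auto

lemma psd_mat_iff_quad_form:
  "psd_mat n M \<longleftrightarrow> M \<in> carrier_mat n n \<and> (\<forall>w. 0 \<le> quad_form n M w)"
proof -
  have "(\<Sum>i<n. cnj (v $ i) * (M *\<^sub>v v) $ i) = quad_form n M (\<lambda>i. v $ i)"
    if "M \<in> carrier_mat n n" "v \<in> carrier_vec n" for v
    using that unfolding quad_form_def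
    by (intro sum.cong refl) (auto simp: scalar_prod_def lessThan_atLeast0)
  moreover have "quad_form n M w = quad_form n M (\<lambda>i. vec n w $ i)" for w
    by (rule quad_form_cong) simp
  ultimately show ?thesis
    unfolding psd_mat_def by (metis vec_carrier)
qed

lemma sum_quad_form:
  "(\<Sum>j\<in>J. quad_form n (M j) w) = (\<Sum>r<n. cnj (w r) * (\<Sum>s<n. (\<Sum>j\<in>J. M j $$ (r, s)) * w s))"
  unfolding quad_form_def
  by (simp add: sum_distrib_left sum_distrib_right mult_ac sum.swap[of _ J])

lemma povm_sum_quad_form:
  assumes "is_povm d k M"
  shows "(\<Sum>j\<in>{1..k}. quad_form (d*d) (M j) w) = inner_fun (d*d) w w"
proof -
  have "(\<Sum>j\<in>{1..k}. M j $$ (r, s)) * w s = (if r = s then w s else 0)" if "r < d*d" "s < d*d" for r s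
    using assms that unfolding is_povm_def by auto
  then show ?thesis
    unfolding sum_quad_form inner_fun_def by simp
qed

lemma povm_quad_form_le:
  assumes "is_povm d k M" "i \<in> {1..k}"
  shows "quad_form (d*d) (M i) w \<le> inner_fun (d*d) w w"
proof -
  have "quad_form (d*d) (M i) w \<le> (\<Sum>j\<in>{1..k}. quad_form (d*d) (M j) w)"
    using assms unfolding is_povm_def psd_mat_iff_quad_form by (intro member_le_sum) auto
  then show ?thesis
    using povm_sum_quad_form[OF assms(1)] by simp
qed

section \<open>The fidelity as a sum of quadratic forms\<close>

definition flatten_mat :: "nat \<Rightarrow> complex mat \<Rightarrow> nat \<Rightarrow> complex" where
  "flatten_mat d U r = U $$ (r div d, r mod d)"

lemma red_AD_eq:
  assumes "c < d" "b < d" "c' < d" "b' < d"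
  shows "red_AD d M c b c' b' = M $$ (c'*d + b', c*d + b) / of_nat d ^ 2"
proof -
  have "red_AD d M c b c' b' = (\<Sum>a<d. \<Sum>dd<d. \<Sum>a2<d. \<Sum>d2<d.
      if d2 = c then if a2 = b then if dd = c' then if a = b'
      then M $$ (dd*d + a, d2*d + a2) / of_nat d ^ 2 else 0 else 0 else 0 else 0)"
    unfolding red_AD_def psi_plus_def by (intro sum.cong refl) (auto simp: power2_eq_square)
  then show ?thesis
    using assms by simp
qed

lemma tr_psi_CB_eq: "tr_psi_CB d X = (\<Sum>c<d. \<Sum>c'<d. X c' c' c c) / of_nat d"
proof -
  have "psi_plus d c b c' b' * X c' b' c b
      = (if b' = c' then if b = c then X c' b' c b / of_nat d else 0 else 0)" for c b c' b'
    by (auto simp: psi_plus_def)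
  moreover have "tr_psi_CB d X = (\<Sum>c<d. \<Sum>c'<d. \<Sum>b<d. \<Sum>b'<d. psi_plus d c b c' b' * X c' b' c b)"
    unfolding tr_psi_CB_def by (intro sum.cong refl sum.swap)
  ultimately show ?thesis
    by (simp add: sum_divide_distrib)
qed

lemma quad_form_flatten_mat:
  "quad_form (d*d) M (flatten_mat d U) =
     (\<Sum>c<d. \<Sum>b<d. \<Sum>c'<d. \<Sum>b'<d. cnj (U $$ (c, b)) * M $$ (c*d + b, c'*d + b') * U $$ (c', b'))"
proof (cases "d = 0")
  case False
  then show ?thesis
    unfolding quad_form_def flatten_mat_def sum_lessThan_mult_split
    by (simp add: sum_distrib_left mult.assoc)
qed (simp add: quad_form_def)

lemma tr_psi_CB_conj_B_red_AD:
  "tr_psi_CB d (conj_B d U (red_AD d M)) = quad_form (d*d) M (flatten_mat d U) / of_nat d ^ 3"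
proof -
  have "conj_B d U (red_AD d M) c' c' c c =
      (\<Sum>b'<d. \<Sum>b<d. cnj (U $$ (c, b)) * M $$ (c*d + b, c'*d + b') * U $$ (c', b')) / of_nat d ^ 2"
    if "c < d" "c' < d" for c c'
    using that unfolding conj_B_def sum_divide_distrib
    by (intro sum.cong refl) (simp add: red_AD_eq)
  then have "tr_psi_CB d (conj_B d U (red_AD d M)) =
      (\<Sum>c<d. \<Sum>c'<d. \<Sum>b'<d. \<Sum>b<d. cnj (U $$ (c, b)) * M $$ (c*d + b, c'*d + b') * U $$ (c', b'))
        / of_nat d ^ 3"
    unfolding tr_psi_CB_eq by (simp add: sum_divide_distrib eval_nat_numeral mult_ac)
  also have "\<dots> = quad_form (d*d) M (flatten_mat d U) / of_nat d ^ 3"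
    unfolding quad_form_flatten_mat
    by (rule arg_cong2[where f = "(/)"], rule sum.cong[OF refl], rule trans[OF _ sum.swap],
        rule sum.cong[OF refl], rule sum.swap) simp
  finally show ?thesis .
qed

lemma tele_fid_eq_sum_quad_form:
  "tele_fid d k M U = (\<Sum>i\<in>{1..k}. quad_form (d*d) (M i) (flatten_mat d (U i))) / of_nat d ^ 3"
  unfolding tele_fid_def tr_psi_CB_conj_B_red_AD by (simp add: sum_divide_distrib)

lemma inner_fun_flatten_unitary:
  assumes "unitary_mat d U"
  shows "inner_fun (d*d) (flatten_mat d U) (flatten_mat d U) = of_nat d"
proof -
  have U: "U \<in> carrier_mat d d" "U * adjoint_mat U = 1\<^sub>m d"
    using assms by (auto simp: unitary_mat_def)
  have "(\<Sum>b<d. cnj (U $$ (c, b)) * U $$ (c, b)) = (U * adjoint_mat U) $$ (c, c)" if "c < d" for c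
    using U(1) that by (simp add: adjoint_mat_def scalar_prod_def lessThan_atLeast0 mult.commute)
  then have "(\<Sum>b<d. cnj (U $$ (c, b)) * U $$ (c, b)) = 1" if "c < d" for c
    using U(2) that by simp
  then show ?thesis
    unfolding inner_fun_def flatten_mat_def
    using sum_lessThan_mult_div_mod[where g = "\<lambda>a b. cnj (U $$ (a, b)) * U $$ (a, b)"] by simp
qed

lemma tele_fid_le:
  assumes "is_povm d k M" "\<forall>i\<in>{1..k}. unitary_mat d (U i)"
  shows "tele_fid d k M U \<le> complex_of_real (real k / real d ^ 2)"
proof (cases "d = 0")
  case False
  have "(\<Sum>i\<in>{1..k}. quad_form (d*d) (M i) (flatten_mat d (U i))) \<le> (\<Sum>i\<in>{1..k}. of_nat d)"
    using povm_quad_form_le[OF assms(1)] inner_fun_flatten_unitary assms(2)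
    by (intro sum_mono) metis
  then have "tele_fid d k M U \<le> of_nat k * of_nat d / of_nat d ^ 3"
    unfolding tele_fid_eq_sum_quad_form by (simp add: less_eq_complex_def divide_right_mono)
  also have "\<dots> = complex_of_real (real k / real d ^ 2)"
    using False by (simp add: eval_nat_numeral)
  finally show ?thesis .
qed (simp add: tele_fid_eq_sum_quad_form)

section \<open>Weyl operators\<close>

text \<open>Matrix entries of the clock-and-shift operator \<open>X\<^sup>a Z\<^sup>b\<close>, where
  \<open>X |s\<rangle> = |s + 1 mod d\<rangle>\<close> and \<open>Z |s\<rangle> = \<omega>\<^sup>s |s\<rangle>\<close> with \<open>\<omega> = exp(2\<pi>i/d)\<close>.\<close>

definition weyl :: "nat \<Rightarrow> nat \<Rightarrow> nat \<Rightarrow> nat \<Rightarrow> nat \<Rightarrow> complex" where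
  "weyl d a b r s = (if r = (s + a) mod d then cis (2 * pi * real b * real s / real d) else 0)"

definition weyl_mat :: "nat \<Rightarrow> nat \<Rightarrow> nat \<Rightarrow> complex mat" where
  "weyl_mat d a b = mat d d (\<lambda>(r, s). weyl d a b r s)"

lemma mod_add_left_cancel_less:
  assumes "x < d" "y < (d::nat)"
  shows "(a + x) mod d = (a + y) mod d \<longleftrightarrow> x = y"
  using assms by (metis cong_add_lcancel_nat cong_def mod_less)

lemma weyl_mat_unitary:
  assumes "0 < d"
  shows "unitary_mat d (weyl_mat d a b)"
proof -
  have adj: "adjoint_mat (weyl_mat d a b) = mat d d (\<lambda>(r, s). cnj (weyl d a b s r))"
    unfolding adjoint_mat_def weyl_mat_def by (rule eq_matI) auto
  have "weyl d a b r s * cnj (weyl d a b r' s) = (if r' = r \<and> (s + a) mod d = r then 1 else 0)" for r r' s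
    by (simp add: weyl_def cis_cnj cis_mult)
  then have "(\<Sum>s<d. weyl d a b r s * cnj (weyl d a b r' s)) = (if r = r' then 1 else 0)" if "r < d" for r r'
    using that sum_lessThan_rotate[where g = "\<lambda>x. if x = r then 1 else 0::complex"] by auto
  then have right: "weyl_mat d a b * adjoint_mat (weyl_mat d a b) = 1\<^sub>m d"
    unfolding adj unfolding weyl_mat_def
    by (intro eq_matI) (auto simp: scalar_prod_def lessThan_atLeast0)
  have "cnj (weyl d a b r s) * weyl d a b r s' = (if s = s' \<and> r = (s + a) mod d then 1 else 0)"
    if "s < d" "s' < d" for r s s'
    using that by (auto simp: weyl_def cis_cnj cis_mult add.commute[of _ a] mod_add_left_cancel_less)
  then have "(\<Sum>r<d. cnj (weyl d a b r s) * weyl d a b r s') = (if s = s' then 1 else 0)"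
    if "s < d" "s' < d" for s s'
    using that assms by (simp add: sum.delta' cong: if_cong)
  then have left: "adjoint_mat (weyl_mat d a b) * weyl_mat d a b = 1\<^sub>m d"
    unfolding adj unfolding weyl_mat_def
    by (intro eq_matI) (auto simp: scalar_prod_def lessThan_atLeast0)
  show ?thesis
    unfolding unitary_mat_def using left right by (simp add: weyl_mat_def)
qed

lemma weyl_orthogonal:
  assumes "a < d" "a' < d" "b < d" "b' < d"
  shows "(\<Sum>r<d. \<Sum>s<d. cnj (weyl d a b r s) * weyl d a' b' r s) = (if a = a' \<and> b = b' then of_nat d else 0)"
proof -
  have "cnj (weyl d a b r s) * weyl d a' b' r s =
      (if r = (s + a) mod d then if a = a' then cis (2 * pi * (real b' - real b) * real s / real d) else 0 else 0)"
    for r s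
    using assms mod_add_left_cancel_less[of a d a' s]
    by (auto simp: weyl_def cis_cnj cis_mult add.commute[of s] diff_divide_distrib left_diff_distrib right_diff_distrib)
  moreover have "(\<Sum>r<d. \<Sum>s<d. cnj (weyl d a b r s) * weyl d a' b' r s) =
      (\<Sum>s<d. \<Sum>r<d. cnj (weyl d a b r s) * weyl d a' b' r s)"
    by (rule sum.swap)
  ultimately show ?thesis
    using assms sum_cis_diff[OF assms(3,4)] by (cases "a = a'") (simp_all add: sum.delta')
qed

lemma weyl_complete:
  assumes "r < d" "s < d" "r' < d" "s' < d"
  shows "(\<Sum>a<d. \<Sum>b<d. weyl d a b r s * cnj (weyl d a b r' s')) = (if r = r' \<and> s = s' then of_nat d else 0)"
proof -
  have "weyl d a b r s * cnj (weyl d a b r' s') =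
      (if r = (s + a) mod d \<and> r' = (s' + a) mod d then 1 else 0) * cis (2 * pi * (real s - real s') * real b / real d)"
    for a b
    by (simp add: weyl_def cis_cnj cis_mult diff_divide_distrib left_diff_distrib right_diff_distrib mult_ac)
  then have "(\<Sum>a<d. \<Sum>b<d. weyl d a b r s * cnj (weyl d a b r' s')) =
      (\<Sum>a<d. (if r = (s + a) mod d \<and> r' = (s' + a) mod d then 1 else 0) * (if s' = s then of_nat d else 0))"
    using sum_cis_diff[OF assms(4,2)] by (simp add: sum_distrib_left[symmetric] mult_ac)
  also have "\<dots> = (if r = r' \<and> s = s' then of_nat d else 0)"
  proof (cases "s = s'")
    case True
    then have "(\<Sum>a<d. (if r = (s + a) mod d \<and> r' = (s' + a) mod d then 1 else 0) * (if s' = s then of_nat d else 0))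
        = (\<Sum>a<d. if r = (a + s) mod d \<and> r' = (a + s) mod d then of_nat d else 0)"
      by (intro sum.cong) (auto simp: add.commute)
    also have "\<dots> = (\<Sum>x<d. if r = x \<and> r' = x then of_nat d else 0)"
      by (rule sum_lessThan_rotate)
    also have "\<dots> = (if r = r' then of_nat d else 0)"
      using assms by (cases "r = r'") (auto intro: sum.neutral)
    finally show ?thesis
      using True by simp
  qed auto
  finally show ?thesis .
qed

definition weyl_basis :: "nat \<Rightarrow> nat \<Rightarrow> complex mat" where
  "weyl_basis d j = weyl_mat d ((j - 1) div d) ((j - 1) mod d)"

lemma sum_weyl_index:
  fixes g :: "nat \<Rightarrow> nat \<Rightarrow> 'a::comm_monoid_add"
  shows "(\<Sum>j\<in>{1..d*d}. g ((j - 1) div d) ((j - 1) mod d)) = (\<Sum>a<d. \<Sum>b<d. g a b)"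
  by (simp add: sum.atLeast1_atMost_eq flip: sum_lessThan_mult_div_mod)

lemma weyl_index_eq_iff:
  fixes d j l :: nat
  assumes "j \<in> {1..d*d}" "l \<in> {1..d*d}"
  shows "(l - 1) div d = (j - 1) div d \<and> (l - 1) mod d = (j - 1) mod d \<longleftrightarrow> l = j"
proof
  assume "(l - 1) div d = (j - 1) div d \<and> (l - 1) mod d = (j - 1) mod d"
  then have "(l - 1) div d * d + (l - 1) mod d = (j - 1) div d * d + (j - 1) mod d"
    by simp
  then have "l - 1 = j - 1"
    by simp
  with assms show "l = j"
    by (metis atLeastAtMost_iff le_add_diff_inverse2)
qed simp

lemma weyl_index_less:
  fixes d j :: nat
  assumes "j \<in> {1..d*d}"
  shows "(j - 1) div d < d" "(j - 1) mod d < d"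
proof -
  have "j - 1 < d * d"
    using assms by auto
  then show "(j - 1) div d < d" "(j - 1) mod d < d"
    by (auto simp: less_mult_imp_div_less) (cases "d = 0"; simp)
qed

lemma flatten_weyl_basis:
  "r < d*d \<Longrightarrow> flatten_mat d (weyl_basis d j) r = weyl d ((j - 1) div d) ((j - 1) mod d) (r div d) (r mod d)"
  by (cases "d = 0") (auto simp: flatten_mat_def weyl_basis_def weyl_mat_def less_mult_imp_div_less)

lemma inner_fun_weyl_basis:
  assumes "j \<in> {1..d*d}" "l \<in> {1..d*d}"
  shows "inner_fun (d*d) (flatten_mat d (weyl_basis d l)) (flatten_mat d (weyl_basis d j)) =
    (if l = j then of_nat d else 0)"
proof -
  let ?W = "\<lambda>j. weyl d ((j - 1) div d) ((j - 1) mod d)"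
  have "inner_fun (d*d) (flatten_mat d (weyl_basis d l)) (flatten_mat d (weyl_basis d j)) =
      (\<Sum>r<d*d. cnj (?W l (r div d) (r mod d)) * ?W j (r div d) (r mod d))"
    unfolding inner_fun_def by (simp add: flatten_weyl_basis)
  also have "\<dots> = (\<Sum>a<d. \<Sum>b<d. cnj (?W l a b) * ?W j a b)"
    by (rule sum_lessThan_mult_div_mod)
  also have "\<dots> = (if l = j then of_nat d else 0)"
    using weyl_orthogonal[OF weyl_index_less(1)[OF assms(2)] weyl_index_less(1)[OF assms(1)]
        weyl_index_less(2)[OF assms(2)] weyl_index_less(2)[OF assms(1)]]
      weyl_index_eq_iff[OF assms] by simp
  finally show ?thesis .
qed

lemma sum_weyl_basis_outer:
  assumes "r < d*d" "s < d*d"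
  shows "(\<Sum>j\<in>{1..d*d}. flatten_mat d (weyl_basis d j) r * cnj (flatten_mat d (weyl_basis d j) s)) =
    (if r = s then of_nat d else 0)"
proof -
  let ?W = "\<lambda>j. weyl d ((j - 1) div d) ((j - 1) mod d)"
  have "d \<noteq> 0"
    using assms by (cases "d = 0") auto
  have "(\<Sum>j\<in>{1..d*d}. flatten_mat d (weyl_basis d j) r * cnj (flatten_mat d (weyl_basis d j) s)) =
      (\<Sum>j\<in>{1..d*d}. ?W j (r div d) (r mod d) * cnj (?W j (s div d) (s mod d)))"
    using assms by (simp add: flatten_weyl_basis)
  also have "\<dots> = (\<Sum>a<d. \<Sum>b<d. weyl d a b (r div d) (r mod d) * cnj (weyl d a b (s div d) (s mod d)))"
    by (rule sum_weyl_index)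
  also have "\<dots> = (if r div d = s div d \<and> r mod d = s mod d then of_nat d else 0)"
    using assms \<open>d \<noteq> 0\<close> by (intro weyl_complete) (auto simp: less_mult_imp_div_less)
  also have "\<dots> = (if r = s then of_nat d else 0)"
    by (metis div_mult_mod_eq)
  finally show ?thesis .
qed

section \<open>An optimal protocol\<close>

lemma quad_form_outer_sum:
  "quad_form n (mat n n (\<lambda>(r, s). \<Sum>l\<in>L. v l r * cnj (v l s) / c)) w =
    (\<Sum>l\<in>L. cnj (inner_fun n (v l) w) * inner_fun n (v l) w / c)"
proof -
  have "quad_form n (mat n n (\<lambda>(r, s). \<Sum>l\<in>L. v l r * cnj (v l s) / c)) w =
      (\<Sum>r<n. \<Sum>l\<in>L. \<Sum>s<n. cnj (w r) * v l r * cnj (v l s) * w s / c)"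
    unfolding quad_form_def
    by (simp add: sum_distrib_left sum_distrib_right mult_ac flip: sum.swap[of _ L])
  also have "\<dots> = (\<Sum>l\<in>L. \<Sum>r<n. \<Sum>s<n. cnj (w r) * v l r * cnj (v l s) * w s / c)"
    by (rule sum.swap)
  also have "\<dots> = (\<Sum>l\<in>L. cnj (inner_fun n (v l) w) * inner_fun n (v l) w / c)"
    unfolding inner_fun_def
    by (simp add: sum_distrib_left sum_distrib_right sum_divide_distrib mult_ac)
  finally show ?thesis .
qed

lemma psd_mat_outer_sum:
  "psd_mat n (mat n n (\<lambda>(r, s). \<Sum>l\<in>L. v l r * cnj (v l s) / of_nat m))"
proof -
  have "0 \<le> cnj x * x / (of_nat m :: complex)" for x
    by (simp add: complex_mult_cnj mult.commute[of "cnj x"] less_eq_complex_def)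
  then show ?thesis
    unfolding psd_mat_iff_quad_form quad_form_outer_sum by (auto intro: sum_nonneg)
qed

definition weyl_block :: "nat \<Rightarrow> nat \<Rightarrow> nat \<Rightarrow> nat set" where
  "weyl_block d k j = (if j < k then {j} else {k..d*d})"

definition teleport_povm :: "nat \<Rightarrow> nat \<Rightarrow> nat \<Rightarrow> complex mat" where
  "teleport_povm d k j = mat (d*d) (d*d) (\<lambda>(r, s).
     \<Sum>l\<in>weyl_block d k j. flatten_mat d (weyl_basis d l) r * cnj (flatten_mat d (weyl_basis d l) s) / of_nat d)"

lemma teleport_povm_is_povm:
  assumes "1 \<le> k" "k \<le> d*d"
  shows "is_povm d k (teleport_povm d k)"
  unfolding is_povm_def
proof (intro conjI ballI allI impI)
  show "psd_mat (d*d) (teleport_povm d k j)" for j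
    unfolding teleport_povm_def by (rule psd_mat_outer_sum)
  fix r s assume rs: "r < d*d" "s < d*d"
  define f where "f l = flatten_mat d (weyl_basis d l) r * cnj (flatten_mat d (weyl_basis d l) s) / of_nat d" for l
  have "(\<Sum>j\<in>{1..k}. teleport_povm d k j $$ (r, s)) = (\<Sum>j\<in>insert k {1..<k}. sum f (weyl_block d k j))"
    using rs assms(1) by (intro sum.cong) (auto simp: teleport_povm_def f_def)
  also have "\<dots> = sum f {1..<k} + sum f {k..d*d}"
    by (simp add: weyl_block_def add.commute)
  also have "\<dots> = sum f ({1..<k} \<union> {k..d*d})"
    by (subst sum.union_disjoint) auto
  also have "{1..<k} \<union> {k..d*d} = {1..d*d}"
    using assms by auto
  also have "sum f {1..d*d} = 1\<^sub>m (d*d) $$ (r, s)"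
    using rs sum_weyl_basis_outer[OF rs] by (cases "d = 0") (simp_all add: f_def flip: sum_divide_distrib)
  finally show "(\<Sum>j\<in>{1..k}. teleport_povm d k j $$ (r, s)) = 1\<^sub>m (d*d) $$ (r, s)" .
qed

lemma quad_form_teleport_povm:
  assumes "j \<in> {1..k}" "k \<le> d*d"
  shows "quad_form (d*d) (teleport_povm d k j) (flatten_mat d (weyl_basis d j)) = of_nat d"
proof -
  have block: "weyl_block d k j \<subseteq> {1..d*d}" "j \<in> weyl_block d k j"
    using assms by (auto simp: weyl_block_def)
  then have "d \<noteq> 0"
    by (cases "d = 0") auto
  have "quad_form (d*d) (teleport_povm d k j) (flatten_mat d (weyl_basis d j)) =
      (\<Sum>l\<in>weyl_block d k j. if l = j then of_nat d else 0)"
    unfolding teleport_povm_def quad_form_outer_sum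
  proof (intro sum.cong refl)
    fix l assume "l \<in> weyl_block d k j"
    then have "l \<in> {1..d*d}" "j \<in> {1..d*d}"
      using block by auto
    then show "cnj (inner_fun (d*d) (flatten_mat d (weyl_basis d l)) (flatten_mat d (weyl_basis d j))) *
        inner_fun (d*d) (flatten_mat d (weyl_basis d l)) (flatten_mat d (weyl_basis d j)) / of_nat d =
        (if l = j then of_nat d else 0)"
      using \<open>d \<noteq> 0\<close> by (simp add: inner_fun_weyl_basis)
  qed
  also have "\<dots> = of_nat d"
    using block finite_subset[OF block(1)] by simp
  finally show ?thesis .
qed

lemma tele_fid_teleport_povm:
  assumes "1 \<le> k" "k \<le> d*d"
  shows "tele_fid d k (teleport_povm d k) (weyl_basis d) = complex_of_real (real k / real d ^ 2)"
proof -
  have "d \<noteq> 0"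
    using assms by (cases "d = 0") auto
  have "tele_fid d k (teleport_povm d k) (weyl_basis d) = (\<Sum>j\<in>{1..k}. of_nat d) / of_nat d ^ 3"
    unfolding tele_fid_eq_sum_quad_form using assms(2) by (simp add: quad_form_teleport_povm)
  also have "\<dots> = complex_of_real (real k / real d ^ 2)"
    using \<open>d \<noteq> 0\<close> by (simp add: eval_nat_numeral)
  finally show ?thesis .
qed

theorem proposition1:
  fixes d k :: nat
  assumes "2 \<le> d" and "1 \<le> k" and "k \<le> d^2"
  shows "(\<exists>M U. is_povm d k M \<and> (\<forall>i\<in>{1..k}. unitary_mat d (U i)) \<and>
            tele_fid d k M U = complex_of_real (real k / real d ^ 2)) \<and>
         (\<forall>M U. is_povm d k M \<and> (\<forall>i\<in>{1..k}. unitary_mat d (U i)) \<longrightarrow>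
            tele_fid d k M U \<le> complex_of_real (real k / real d ^ 2))"
proof (intro conjI allI impI)
  have "k \<le> d*d"
    using assms(3) by (simp add: power2_eq_square)
  moreover have "\<forall>i\<in>{1..k}. unitary_mat d (weyl_basis d i)"
    using assms(1) by (simp add: weyl_basis_def weyl_mat_unitary)
  ultimately show "\<exists>M U. is_povm d k M \<and> (\<forall>i\<in>{1..k}. unitary_mat d (U i)) \<and>
      tele_fid d k M U = complex_of_real (real k / real d ^ 2)"
    using assms(2) teleport_povm_is_povm tele_fid_teleport_povm by blast
next
  fix M U
  assume "is_povm d k M \<and> (\<forall>i\<in>{1..k}. unitary_mat d (U i))"
  then show "tele_fid d k M U \<le> complex_of_real (real k / real d ^ 2)"
    using tele_fid_le by blast
qed

end
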